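(* Let $G_1, G_2$ be two graphs on the same vertex set $V$. Let $A \subseteq S(G_1) \cap S(G_2)$ and $B\subseteq V$ be such that $N_{G_1}(B) \cup N_{G_2}(B) \subseteq A$. Suppose $E(G_1) \triangle E(G_2) \subseteq \binom{A \cup B}{2}$. Then \[ S(G_1) \setminus B = S(G_2)\setminus B,\quad P(G_1) \setminus B = P(G_2) \setminus B,\quad R(G_1) \setminus B = R(G_2) \setminus B. \] Moreover, for any vertex $w \in V \setminus B$, we have $C_w(G_1) = C_w(G_2) \subseteq V \setminus (A \cup B)$, $G_1[C_w(G_1)] = G_2[C_w(G_2)]$, and $R(G_1) \cap C_w(G_1) = R(G_2) \cap C_w(G_2)$.
   Context: For a graph $G$ and $X\subseteq V(G)$, $N_G(X)=\{x\in V(G)\setminus X: xy\in E(G)\text{ for some }y\in X\}$ and $N_G(x)=N_G(\{x\})$. The strong $4$-core $S(G)$ is the maximal $X\subseteq V(G)$ with $|N_G(x)\cap X|\ge4$ for all $x\in X\cup N_G(X)$; $P(G)=N_G(S(G))$ and $R(G)=V(G)\setminus(S(G)\cup P(G))$. For $w\in P(G)\cup R(G)$, $C_w(G)$ is the vertex set of the connected component of $G[P(G)\cup R(G)]$ containing $w$; for $w\in S(G)$, $C_w(G)=\varnothing$. $\triangle$ denotes symmetric difference. *)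

theory Defs
  imports Main
begin

definition graph :: "'a set \<Rightarrow> 'a set set \<Rightarrow> bool" where
  "graph V E \<longleftrightarrow> finite V \<and> (\<forall>e\<in>E. e \<subseteq> V \<and> card e = 2)"

definition nbhd :: "'a set \<Rightarrow> 'a set set \<Rightarrow> 'a set \<Rightarrow> 'a set" where
  "nbhd V E X = {x \<in> V - X. \<exists>y\<in>X. {x, y} \<in> E}"

definition nbhdv :: "'a set \<Rightarrow> 'a set set \<Rightarrow> 'a \<Rightarrow> 'a set" where
  "nbhdv V E x = nbhd V E {x}"

definition strong4 :: "'a set \<Rightarrow> 'a set set \<Rightarrow> 'a set \<Rightarrow> bool" where
  "strong4 V E X \<longleftrightarrow> X \<subseteq> V \<and>
     (\<forall>x \<in> X \<union> nbhd V E X. card (nbhdv V E x \<inter> X) \<ge> 4)"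

text \<open>The strong 4-core: the maximal such set. The property is closed under unions,
  so the maximal set is the union of all of them.\<close>
definition Score :: "'a set \<Rightarrow> 'a set set \<Rightarrow> 'a set" where
  "Score V E = \<Union>{X. strong4 V E X}"

definition Pset :: "'a set \<Rightarrow> 'a set set \<Rightarrow> 'a set" where
  "Pset V E = nbhd V E (Score V E)"

definition Rset :: "'a set \<Rightarrow> 'a set set \<Rightarrow> 'a set" where
  "Rset V E = V - (Score V E \<union> Pset V E)"

definition adj_in :: "'a set set \<Rightarrow> 'a set \<Rightarrow> 'a \<Rightarrow> 'a \<Rightarrow> bool" where
  "adj_in E U x y \<longleftrightarrow> x \<in> U \<and> y \<in> U \<and> {x, y} \<in> E"

definition Comp :: "'a set \<Rightarrow> 'a set set \<Rightarrow> 'a \<Rightarrow> 'a set" where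
  "Comp V E w = (if w \<in> Pset V E \<union> Rset V E
     then {v. (adj_in E (Pset V E \<union> Rset V E))\<^sup>*\<^sup>* w v}
     else {})"

definition induced :: "'a set set \<Rightarrow> 'a set \<Rightarrow> 'a set set" where
  "induced E C = {e \<in> E. e \<subseteq> C}"

end

theory Submission
  imports Defs
begin

text \<open>Vertices outside \<open>A \<union> B\<close> have the same neighbourhood in both graphs, and this
  neighbourhood avoids \<open>B\<close> because \<open>N(B) \<subseteq> A\<close>. Hence \<open>(S(G\<^sub>1) - B) \<union> S(G\<^sub>2)\<close> satisfies the
  strong 4-core condition in \<open>G\<^sub>2\<close>: vertices in or next to \<open>S(G\<^sub>2)\<close> inherit it from \<open>S(G\<^sub>2)\<close>,
  the remaining vertices outside \<open>A \<union> B\<close> inherit it from \<open>S(G\<^sub>1)\<close>, and no vertex of \<open>B\<close> can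
  be adjacent to the set without being adjacent to \<open>S(G\<^sub>2)\<close>, since its neighbours outside \<open>B\<close>
  lie in \<open>N(B) \<subseteq> A \<subseteq> S(G\<^sub>2)\<close>. By maximality and symmetry the cores agree off \<open>B\<close>, which
  gives \<open>P\<close> and \<open>R\<close>. A path in \<open>G[P \<union> R]\<close> starting outside \<open>B\<close> stays outside \<open>A\<close>, so it
  never enters \<open>B\<close> and uses only edges common to both graphs.\<close>

lemma mem_nbhd_iff: "x \<in> nbhd V E X \<longleftrightarrow> x \<in> V \<and> x \<notin> X \<and> (\<exists>y\<in>X. {x, y} \<in> E)"
  unfolding nbhd_def by blast

lemma mem_nbhdv_iff: "v \<in> nbhdv V E x \<longleftrightarrow> v \<in> V \<and> v \<noteq> x \<and> {x, v} \<in> E"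
  unfolding nbhdv_def nbhd_def by (auto simp: insert_commute)

lemma mem_nbhd_iff_nbhdv:
  assumes "X \<subseteq> V"
  shows "x \<in> nbhd V E X \<longleftrightarrow> x \<in> V - X \<and> nbhdv V E x \<inter> X \<noteq> {}"
  using assms by (auto simp: mem_nbhd_iff mem_nbhdv_iff disjoint_iff)

lemma nbhdv_disjoint_if_nbhd_subset:
  assumes "nbhd V E B \<subseteq> A" and "x \<in> V - (A \<union> B)"
  shows "nbhdv V E x \<inter> B = {}"
proof -
  have "x \<notin> nbhd V E B" using assms by blast
  then show ?thesis using assms by (auto simp: mem_nbhd_iff mem_nbhdv_iff)
qed

lemma Score_subset: "Score V E \<subseteq> V"
  unfolding Score_def strong4_def by blast

lemma strong4_imp_subset_Score: "strong4 V E X \<Longrightarrow> X \<subseteq> Score V E"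
  unfolding Score_def by blast

lemma strong4_Score:
  assumes "finite V"
  shows "strong4 V E (Score V E)"
  unfolding strong4_def
proof (intro conjI ballI)
  show "Score V E \<subseteq> V" by (fact Score_subset)
  fix x assume x: "x \<in> Score V E \<union> nbhd V E (Score V E)"
  obtain Y where Y: "strong4 V E Y" "x \<in> Y \<union> nbhd V E Y"
    using x unfolding Score_def nbhd_def by blast
  have "4 \<le> card (nbhdv V E x \<inter> Y)"
    using Y unfolding strong4_def by blast
  also have "\<dots> \<le> card (nbhdv V E x \<inter> Score V E)"
    using strong4_imp_subset_Score[OF Y(1)] finite_subset[OF Score_subset assms]
    by (intro card_mono) auto
  finally show "4 \<le> card (nbhdv V E x \<inter> Score V E)" .
qed

lemma Pset_Un_Rset: "Pset V E \<union> Rset V E = V - Score V E"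
  unfolding Rset_def Pset_def nbhd_def by blast

definition edges_agree_outside :: "'a set set \<Rightarrow> 'a set set \<Rightarrow> 'a set \<Rightarrow> bool" where
  "edges_agree_outside E1 E2 C \<longleftrightarrow> (\<forall>e. \<not> e \<subseteq> C \<longrightarrow> (e \<in> E1 \<longleftrightarrow> e \<in> E2))"

lemma edges_agree_outside_sym:
  "edges_agree_outside E1 E2 C \<Longrightarrow> edges_agree_outside E2 E1 C"
  unfolding edges_agree_outside_def by blast

lemma edges_agree_outsideD:
  "edges_agree_outside E1 E2 C \<Longrightarrow> x \<notin> C \<Longrightarrow> {x, y} \<in> E1 \<longleftrightarrow> {x, y} \<in> E2"
  unfolding edges_agree_outside_def by blast

lemma nbhdv_eq_if_edges_agree_outside:
  "edges_agree_outside E1 E2 C \<Longrightarrow> x \<notin> C \<Longrightarrow> nbhdv V E1 x = nbhdv V E2 x"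
  by (auto simp: mem_nbhdv_iff dest: edges_agree_outsideD)

lemma induced_eq_if_edges_agree_outside:
  assumes "edges_agree_outside E1 E2 C" and "{} \<notin> E1" and "{} \<notin> E2" and "U \<inter> C = {}"
  shows "induced E1 U = induced E2 U"
proof -
  have "e \<in> E1 \<longleftrightarrow> e \<in> E2" if "e \<subseteq> U" for e
    using assms that unfolding edges_agree_outside_def by (cases "e = {}") blast+
  then show ?thesis unfolding induced_def by blast
qed

lemma nbhd_diff_subset: "nbhd V E (Y - B) \<subseteq> Y \<union> nbhd V E Y"
  by (auto simp: mem_nbhd_iff)

lemma mem_Un_nbhd_if_nbhdv_eq:
  assumes "Y \<subseteq> V" and "Z \<subseteq> V" and "nbhdv V E1 x = nbhdv V E2 x"
    and "x \<in> (Y \<union> Z) \<union> nbhd V E2 (Y \<union> Z)" and "x \<notin> Z \<union> nbhd V E2 Z"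
  shows "x \<in> Y \<union> nbhd V E1 Y"
proof (cases "x \<in> Y")
  case False
  have "Y \<union> Z \<subseteq> V" using assms(1,2) by blast
  then have "x \<in> V" and "nbhdv V E2 x \<inter> (Y \<union> Z) \<noteq> {}"
    using assms(4,5) False mem_nbhd_iff_nbhdv[of "Y \<union> Z"] by auto
  moreover have "nbhdv V E2 x \<inter> Z = {}"
    using assms(5) \<open>x \<in> V\<close> mem_nbhd_iff_nbhdv[OF assms(2)] by blast
  ultimately show ?thesis
    using False assms(3) mem_nbhd_iff_nbhdv[OF assms(1)] by blast
qed simp

lemma Un_nbhd_diff_Un_subset:
  assumes "Y \<subseteq> V" and "A \<subseteq> Z" and "nbhd V E B \<subseteq> A"
  shows "((Y - B) \<union> Z) \<union> nbhd V E ((Y - B) \<union> Z) \<subseteq> Z \<union> nbhd V E Z \<union> (V - (A \<union> B))"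
proof
  fix x assume x: "x \<in> ((Y - B) \<union> Z) \<union> nbhd V E ((Y - B) \<union> Z)"
  show "x \<in> Z \<union> nbhd V E Z \<union> (V - (A \<union> B))"
  proof (cases "x \<in> Z \<union> nbhd V E Z")
    case off_Z: False
    have "x \<in> V" "x \<notin> A" using x off_Z assms(1,2) by (auto simp: mem_nbhd_iff)
    moreover have "x \<notin> B"
    proof
      assume "x \<in> B"
      then obtain y where y: "y \<in> Y - B" "{x, y} \<in> E"
        using x off_Z \<open>x \<in> V\<close> by (auto simp: mem_nbhd_iff)
      then have "y \<in> nbhd V E B"
        using \<open>x \<in> B\<close> assms(1) by (auto simp: mem_nbhd_iff insert_commute)
      then have "y \<in> Z" using assms(2,3) by blast
      then show False using off_Z y \<open>x \<in> V\<close> by (auto simp: mem_nbhd_iff)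
    qed
    ultimately show ?thesis by blast
  qed blast
qed

lemma strong4_Score_diff_Un:
  assumes fin: "finite V" and A2: "A \<subseteq> Score V E2"
    and N1: "nbhd V E1 B \<subseteq> A" and N2: "nbhd V E2 B \<subseteq> A"
    and agree: "edges_agree_outside E1 E2 (A \<union> B)"
  shows "strong4 V E2 ((Score V E1 - B) \<union> Score V E2)"
proof -
  define S1 where "S1 = Score V E1"
  define S2 where "S2 = Score V E2"
  define X where "X = (S1 - B) \<union> S2"
  have S1V: "S1 \<subseteq> V" and S2V: "S2 \<subseteq> V"
    unfolding S1_def S2_def by (fact Score_subset)+
  then have XV: "X \<subseteq> V" unfolding X_def by blast
  have "strong4 V E2 X"
    unfolding strong4_def
  proof (intro conjI ballI)
    show "X \<subseteq> V" by (fact XV)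
    fix x assume xX: "x \<in> X \<union> nbhd V E2 X"
    have fin_X: "finite (nbhdv V E2 x \<inter> X)"
      using finite_subset[OF XV fin] by simp
    show "4 \<le> card (nbhdv V E2 x \<inter> X)"
    proof (cases "x \<in> S2 \<union> nbhd V E2 S2")
      case True
      then have "4 \<le> card (nbhdv V E2 x \<inter> S2)"
        using strong4_Score[OF fin, of E2] unfolding strong4_def S2_def by blast
      also have "\<dots> \<le> card (nbhdv V E2 x \<inter> X)"
        using fin_X by (intro card_mono) (auto simp: X_def)
      finally show ?thesis .
    next
      case off_S2: False
      have x_out: "x \<in> V - (A \<union> B)"
        using Un_nbhd_diff_Un_subset[OF S1V _ N2, of S2] A2 xX off_S2
        unfolding S2_def X_def by blast
      have same: "nbhdv V E1 x = nbhdv V E2 x"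
        using nbhdv_eq_if_edges_agree_outside[OF agree] x_out by blast
      have avoid_B: "nbhdv V E1 x \<inter> B = {}"
        using nbhdv_disjoint_if_nbhd_subset[OF N1 x_out] .
      have "S1 - B \<subseteq> V" using S1V by blast
      then have "x \<in> (S1 - B) \<union> nbhd V E1 (S1 - B)"
        using mem_Un_nbhd_if_nbhdv_eq[OF _ S2V same xX[unfolded X_def] off_S2] by blast
      then have "x \<in> S1 \<union> nbhd V E1 S1"
        using nbhd_diff_subset[of V E1 S1 B] by blast
      then have "4 \<le> card (nbhdv V E1 x \<inter> S1)"
        using strong4_Score[OF fin, of E1] unfolding strong4_def S1_def by blast
      also have "\<dots> \<le> card (nbhdv V E2 x \<inter> X)"
        using fin_X same avoid_B by (intro card_mono) (auto simp: X_def)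
      finally show ?thesis .
    qed
  qed
  then show ?thesis unfolding X_def S1_def S2_def .
qed

lemma Score_diff_subset:
  assumes "finite V" and "A \<subseteq> Score V E2"
    and "nbhd V E1 B \<subseteq> A" and "nbhd V E2 B \<subseteq> A"
    and "edges_agree_outside E1 E2 (A \<union> B)"
  shows "Score V E1 - B \<subseteq> Score V E2"
  using strong4_imp_subset_Score[OF strong4_Score_diff_Un[OF assms]] by blast

lemma Pset_diff_subset:
  assumes A1: "A \<subseteq> Score V E1" and N1: "nbhd V E1 B \<subseteq> A"
    and agree: "edges_agree_outside E1 E2 (A \<union> B)"
    and SB: "Score V E1 - B = Score V E2 - B"
  shows "Pset V E1 - B \<subseteq> Pset V E2"
proof
  fix x assume x: "x \<in> Pset V E1 - B"
  then have x_out: "x \<in> V - (A \<union> B)" and xS2: "x \<notin> Score V E2"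
    using A1 SB by (auto simp: Pset_def mem_nbhd_iff)
  have "nbhdv V E1 x \<inter> Score V E1 \<noteq> {}"
    using x by (auto simp: Pset_def mem_nbhd_iff_nbhdv[OF Score_subset])
  moreover have "nbhdv V E1 x \<inter> B = {}"
    using nbhdv_disjoint_if_nbhd_subset[OF N1 x_out] .
  moreover have "nbhdv V E1 x = nbhdv V E2 x"
    using nbhdv_eq_if_edges_agree_outside[OF agree] x_out by blast
  ultimately have "nbhdv V E2 x \<inter> Score V E2 \<noteq> {}"
    using SB by blast
  then show "x \<in> Pset V E2"
    using x_out xS2 by (auto simp: Pset_def mem_nbhd_iff_nbhdv[OF Score_subset])
qed

lemma rtranclp_adj_in_transfer:
  assumes U1: "U1 \<subseteq> V" "U1 \<inter> A = {}" and N1: "nbhd V E1 B \<subseteq> A"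
    and agree: "edges_agree_outside E1 E2 (A \<union> B)"
    and UB: "U1 - B = U2 - B"
    and path: "(adj_in E1 U1)\<^sup>*\<^sup>* w v" and w: "w \<in> U1 - B"
  shows "(adj_in E2 U2)\<^sup>*\<^sup>* w v \<and> v \<in> U1 - B"
  using path
proof (induction rule: rtranclp_induct)
  case base
  then show ?case using w by simp
next
  case (step u v)
  have u: "u \<in> V - (A \<union> B)" "u \<in> U1" and v: "v \<in> U1" "{u, v} \<in> E1"
    using step U1 by (auto simp: adj_in_def)
  have "v \<notin> B"
    using nbhdv_disjoint_if_nbhd_subset[OF N1 u(1)] u(1) U1 v
    by (auto simp: mem_nbhdv_iff disjoint_iff)
  moreover have "{u, v} \<in> E2"
    using edges_agree_outsideD[OF agree] u v by blast
  ultimately have "adj_in E2 U2 u v"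
    using UB u v by (auto simp: adj_in_def)
  then show ?case using step \<open>v \<notin> B\<close> v by (meson DiffI rtranclp.rtrancl_into_rtrancl)
qed

lemma Comp_eq_and_subset:
  assumes A1: "A \<subseteq> Score V E1" and A2: "A \<subseteq> Score V E2"
    and N1: "nbhd V E1 B \<subseteq> A" and N2: "nbhd V E2 B \<subseteq> A"
    and agree: "edges_agree_outside E1 E2 (A \<union> B)"
    and SB: "Score V E1 - B = Score V E2 - B"
    and w: "w \<in> V - B"
  shows "Comp V E1 w = Comp V E2 w \<and> Comp V E1 w \<subseteq> V - (A \<union> B)"
proof -
  define U1 where "U1 = V - Score V E1"
  define U2 where "U2 = V - Score V E2"
  have Comp: "Comp V E1 w = (if w \<in> U1 then {v. (adj_in E1 U1)\<^sup>*\<^sup>* w v} else {})"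
    "Comp V E2 w = (if w \<in> U2 then {v. (adj_in E2 U2)\<^sup>*\<^sup>* w v} else {})"
    unfolding Comp_def Pset_Un_Rset U1_def U2_def by simp_all
  have U1: "U1 \<subseteq> V" "U1 \<inter> A = {}" and U2: "U2 \<subseteq> V" "U2 \<inter> A = {}"
    using A1 A2 unfolding U1_def U2_def by blast+
  have UB: "U1 - B = U2 - B" using SB unfolding U1_def U2_def by blast
  show ?thesis
  proof (cases "w \<in> U1")
    case True
    then have w1: "w \<in> U1 - B" and w2: "w \<in> U2 - B" using w UB by auto
    note forward = rtranclp_adj_in_transfer[OF U1 N1 agree UB _ w1]
    note backward =
      rtranclp_adj_in_transfer[OF U2 N2 edges_agree_outside_sym[OF agree] UB[symmetric] _ w2]
    have "{v. (adj_in E1 U1)\<^sup>*\<^sup>* w v} = {v. (adj_in E2 U2)\<^sup>*\<^sup>* w v}"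
      using forward backward by blast
    moreover have "{v. (adj_in E1 U1)\<^sup>*\<^sup>* w v} \<subseteq> V - (A \<union> B)"
      using forward U1 by blast
    ultimately show ?thesis using w1 w2 by (simp add: Comp)
  next
    case False
    then have "w \<notin> U2" using w UB by blast
    then show ?thesis using False by (simp add: Comp)
  qed
qed

theorem lemma4p5:
  fixes V :: "'a set" and E1 E2 :: "'a set set" and A B :: "'a set"
  assumes "graph V E1" and "graph V E2"
    and "A \<subseteq> Score V E1 \<inter> Score V E2"
    and "B \<subseteq> V"
    and "nbhd V E1 B \<union> nbhd V E2 B \<subseteq> A"
    and "(E1 - E2) \<union> (E2 - E1) \<subseteq> {e. e \<subseteq> A \<union> B \<and> card e = 2}"
  shows "Score V E1 - B = Score V E2 - B
    \<and> Pset V E1 - B = Pset V E2 - B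
    \<and> Rset V E1 - B = Rset V E2 - B
    \<and> (\<forall>w \<in> V - B. Comp V E1 w = Comp V E2 w
           \<and> Comp V E1 w \<subseteq> V - (A \<union> B)
           \<and> induced E1 (Comp V E1 w) = induced E2 (Comp V E2 w)
           \<and> Rset V E1 \<inter> Comp V E1 w = Rset V E2 \<inter> Comp V E2 w)"
proof -
  have fin: "finite V" using assms(1) by (simp add: graph_def)
  have no_empty: "{} \<notin> E1" "{} \<notin> E2"
    using assms(1,2) unfolding graph_def by (metis card.empty zero_neq_numeral)+
  have A1: "A \<subseteq> Score V E1" and A2: "A \<subseteq> Score V E2"
    and N1: "nbhd V E1 B \<subseteq> A" and N2: "nbhd V E2 B \<subseteq> A"
    using assms(3,5) by auto
  have agree: "edges_agree_outside E1 E2 (A \<union> B)"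
    using assms(6) unfolding edges_agree_outside_def by blast
  note agree' = edges_agree_outside_sym[OF agree]
  have SB: "Score V E1 - B = Score V E2 - B"
    using Score_diff_subset[OF fin A2 N1 N2 agree] Score_diff_subset[OF fin A1 N2 N1 agree'] by blast
  have PB: "Pset V E1 - B = Pset V E2 - B"
    using Pset_diff_subset[OF A1 N1 agree SB] Pset_diff_subset[OF A2 N2 agree' SB[symmetric]] by blast
  have RB: "Rset V E1 - B = Rset V E2 - B"
    using SB PB unfolding Rset_def by blast
  have "Comp V E1 w = Comp V E2 w \<and> Comp V E1 w \<subseteq> V - (A \<union> B)
      \<and> induced E1 (Comp V E1 w) = induced E2 (Comp V E2 w)
      \<and> Rset V E1 \<inter> Comp V E1 w = Rset V E2 \<inter> Comp V E2 w" if w: "w \<in> V - B" for w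
  proof -
    have eq: "Comp V E1 w = Comp V E2 w" and sub: "Comp V E1 w \<subseteq> V - (A \<union> B)"
      using Comp_eq_and_subset[OF A1 A2 N1 N2 agree SB w] by auto
    have "induced E1 (Comp V E1 w) = induced E2 (Comp V E2 w)"
      using induced_eq_if_edges_agree_outside[OF agree no_empty] sub unfolding eq by blast
    moreover have "Rset V E1 \<inter> Comp V E1 w = Rset V E2 \<inter> Comp V E2 w"
      using RB sub unfolding eq by blast
    ultimately show ?thesis using eq sub by blast
  qed
  then show ?thesis using SB PB RB by blast
qed

end
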